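(* Let $G=(V,E,W)$ be a connected graph and $i,j\in V$ fixed distinct nodes. Then the map $\sigma\mapsto r^\sigma_{ij}$, defined on the set of $d$-dimensional signatures on $G$, is continuous.
   Context: $G$ finite connected weighted graph, $V=\{1,\dots,n\}$, $w_{xy}>0$ iff $\{x,y\}\in E$, $\deg(x)=\sum_yw_{xy}$. A $d$-dimensional signature is a map from oriented edges to $\mathsf{O}(d)$ with $\sigma_{yx}=\sigma_{xy}^{\mathrm T}$; the set of signatures is identified with $\mathsf{O}(d)^{E}$ (one matrix per edge with a fixed orientation) with the product topology. Connection Laplacian $\mathcal{L}^\sigma$: $nd\times nd$ block matrix with blocks $\deg(x)I_d$ on the diagonal, $-w_{xy}\sigma_{xy}$ for $x\sim y$, $0$ otherwise; $\dagger$ = Moore–Penrose pseudoinverse. $\Omega^0_{ij}=\mathbb{E}[\prod_{\ell=1}^{T^0_j}\sigma_{X_{\ell-1}X_\ell}\mid X_0=i]$ for the simple random walk with transition probabilities $w_{xy}/\deg(x)$ and $T^0_j=\inf\{t\ge0:X_t=j\}$. $N_{ij}$: $nd\times d$ block column with $I_d$ at node $i$, $-(\Omega^0_{ij})^{\mathrm T}$ at node $j$, $0$ elsewhere; $\mathcal{W}_{i\to j}=(\mathcal{L}^\sigma)^\dagger N_{ij}$. Connection effective resistance: $r^\sigma_{ij}=\frac{1}{2d}\operatorname{Tr}\big(\mathcal{W}_{i\to j}^{\mathrm T}\mathcal{L}^\sigma\mathcal{W}_{i\to j}+\mathcal{W}_{j\to i}^{\mathrm T}\mathcal{L}^\sigma\mathcal{W}_{j\to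 i}\big)$. *)

theory Defs
  imports "HOL-Analysis.Analysis"
begin

text \<open>Weighted graphs: vertex set = the finite type 'n, weights w x y (w x y > 0 iff edge).\<close>

definition weighted_graph :: "('n::finite \<Rightarrow> 'n \<Rightarrow> real) \<Rightarrow> bool" where
  "weighted_graph w \<longleftrightarrow> (\<forall>x y. w x y \<ge> 0 \<and> w x y = w y x) \<and> (\<forall>x. w x x = 0)"

definition graph_connected :: "('n::finite \<Rightarrow> 'n \<Rightarrow> real) \<Rightarrow> bool" where
  "graph_connected w \<longleftrightarrow> (\<forall>x y. (x, y) \<in> {(a, b). w a b > 0}\<^sup>*)"

definition deg :: "('n::finite \<Rightarrow> 'n \<Rightarrow> real) \<Rightarrow> 'n \<Rightarrow> real" where
  "deg w x = (\<Sum>y\<in>UNIV. w x y)"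

text \<open>d-dimensional signatures (d = CARD('d)): one orthogonal matrix per oriented edge,
  with sigma y x = transpose (sigma x y); normalised to 0 off the edges, so that the
  subspace topology of the product topology is that of O(d)^E.\<close>

definition signatures :: "('n::finite \<Rightarrow> 'n \<Rightarrow> real) \<Rightarrow> ('n \<Rightarrow> 'n \<Rightarrow> real^'d::finite^'d) set" where
  "signatures w = {\<sigma>. \<forall>x y.
      (w x y > 0 \<longrightarrow> orthogonal_matrix (\<sigma> x y) \<and> \<sigma> y x = transpose (\<sigma> x y)) \<and>
      (\<not> w x y > 0 \<longrightarrow> \<sigma> x y = 0)}"

definition conn_laplacian ::
  "('n::finite \<Rightarrow> 'n \<Rightarrow> real) \<Rightarrow> ('n \<Rightarrow> 'n \<Rightarrow> real^'d::finite^'d) \<Rightarrow> real^('n \<times> 'd)^('n \<times> 'd)" where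
  "conn_laplacian w \<sigma> = (\<chi> r c. let (x, a) = r; (y, b) = c in
      if x = y then (if a = b then deg w x else 0)
      else if w x y > 0 then - w x y * (\<sigma> x y $ a $ b) else 0)"

definition pinv :: "real^'m::finite^'m \<Rightarrow> real^'m^'m" where
  "pinv A = (THE X. A ** X ** A = A \<and> X ** A ** X = X \<and>
                    transpose (A ** X) = A ** X \<and> transpose (X ** A) = X ** A)"

fun walk_prob :: "('n::finite \<Rightarrow> 'n \<Rightarrow> real) \<Rightarrow> 'n list \<Rightarrow> real" where
  "walk_prob w (x # y # p) = w x y / deg w x * walk_prob w (y # p)"
| "walk_prob w _ = 1"

fun walk_holonomy :: "('n \<Rightarrow> 'n \<Rightarrow> real^'d::finite^'d) \<Rightarrow> 'n list \<Rightarrow> real^'d^'d" where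
  "walk_holonomy \<sigma> (x # y # p) = \<sigma> x y ** walk_holonomy \<sigma> (y # p)"
| "walk_holonomy \<sigma> _ = mat 1"

definition first_hit_walks :: "'n \<Rightarrow> 'n \<Rightarrow> 'n list set" where
  "first_hit_walks i j = {p. p \<noteq> [] \<and> hd p = i \<and> last p = j \<and> j \<notin> set (butlast p)}"

text \<open>Omega^0_{ij} = E[ prod_{l=1}^{T_j} sigma_{X_{l-1} X_l} | X_0 = i ], written out as the
  sum over all possible stopped trajectories of probability times value.\<close>

definition Omega0 ::
  "('n::finite \<Rightarrow> 'n \<Rightarrow> real) \<Rightarrow> ('n \<Rightarrow> 'n \<Rightarrow> real^'d::finite^'d) \<Rightarrow> 'n \<Rightarrow> 'n \<Rightarrow> real^'d^'d" where
  "Omega0 w \<sigma> i j = (\<Sum>\<^sub>\<infinity>p\<in>first_hit_walks i j. walk_prob w p *\<^sub>R walk_holonomy \<sigma> p)"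

definition Nmat ::
  "('n::finite \<Rightarrow> 'n \<Rightarrow> real) \<Rightarrow> ('n \<Rightarrow> 'n \<Rightarrow> real^'d::finite^'d) \<Rightarrow> 'n \<Rightarrow> 'n \<Rightarrow> real^'d^('n \<times> 'd)" where
  "Nmat w \<sigma> i j = (\<chi> r b. let (x, a) = r in
      if x = i then (mat 1 :: real^'d^'d) $ a $ b
      else if x = j then - (transpose (Omega0 w \<sigma> i j) $ a $ b) else 0)"

definition Wmat ::
  "('n::finite \<Rightarrow> 'n \<Rightarrow> real) \<Rightarrow> ('n \<Rightarrow> 'n \<Rightarrow> real^'d::finite^'d) \<Rightarrow> 'n \<Rightarrow> 'n \<Rightarrow> real^'d^('n \<times> 'd)" where
  "Wmat w \<sigma> i j = pinv (conn_laplacian w \<sigma>) ** Nmat w \<sigma> i j"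

definition conn_eff_resistance ::
  "('n::finite \<Rightarrow> 'n \<Rightarrow> real) \<Rightarrow> ('n \<Rightarrow> 'n \<Rightarrow> real^'d::finite^'d) \<Rightarrow> 'n \<Rightarrow> 'n \<Rightarrow> real" where
  "conn_eff_resistance w \<sigma> i j =
     1 / (2 * real CARD('d)) *
     (trace (transpose (Wmat w \<sigma> i j) ** conn_laplacian w \<sigma> ** Wmat w \<sigma> i j) +
      trace (transpose (Wmat w \<sigma> j i) ** conn_laplacian w \<sigma> ** Wmat w \<sigma> j i))"

end

theory Submission
  imports Defs
begin

text \<open>Ground the connection Laplacian \<open>L\<close> at \<open>j\<close>. The grounded matrix \<open>L\<^sub>j\<close> is invertible on a
  connected graph: a vector in its kernel vanishes at \<open>j\<close> and has zero energy
  \<open>v\<^sup>T L v = 1/2 \<Sum> w\<^sub>x\<^sub>y |v\<^sub>x - \<sigma>\<^sub>x\<^sub>y v\<^sub>y|\<^sup>2\<close>, so \<open>|v\<^sub>x|\<close> is constant along edges.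
  By first-step analysis the hitting-time holonomies \<open>\<Omega>\<^sup>0\<^sub>x\<^sub>j\<close> are harmonic off \<open>j\<close>, and together with
  the symmetry of \<open>L\<^sub>j\<close> this shows that \<open>X = L\<^sub>j\<^sup>-\<^sup>1 E\<^sub>i\<close> solves \<open>L X = N\<^sub>i\<^sub>j\<close>. Since \<open>L L\<^sup>\<dagger> L = L\<close>,
  the energy \<open>W\<^sup>T L W\<close> of \<open>W = L\<^sup>\<dagger> N\<^sub>i\<^sub>j\<close> equals \<open>X\<^sup>T N\<^sub>i\<^sub>j\<close>, whose trace is that of the \<open>(i, i)\<close>
  block of \<open>L\<^sub>j\<^sup>-\<^sup>1\<close>. Hence \<open>r\<^sup>\<sigma>\<^sub>i\<^sub>j\<close> is a sum of entries of inverses of matrices that depend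
  continuously on \<open>\<sigma>\<close> and are invertible at every signature, and Cramer's rule gives continuity.\<close>

lemma matrix_add_rdistrib: "((A::'a::semiring_1^'n^'m) + B) ** C = A ** C + B ** C"
  by (vector matrix_matrix_mult_def sum.distrib[symmetric] field_simps)

lemma matrix_diff_rdistrib: "((A::'a::ring_1^'n^'m) - B) ** C = A ** C - B ** C"
  by (vector matrix_matrix_mult_def sum_subtractf[symmetric] field_simps)

lemma matrix_diff_ldistrib: "(A::'a::ring_1^'n^'m) ** (B - C) = A ** B - A ** C"
  by (vector matrix_matrix_mult_def sum_subtractf[symmetric] field_simps)

lemma bounded_linear_matrix_mult_left: "bounded_linear (\<lambda>M::real^'n::finite^'m::finite. A ** M)"
proof -
  have "linear (\<lambda>M::real^'n^'m. A ** M)"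
    by (rule linearI) (simp_all add: matrix_add_ldistrib matrix_scalar_ac scalar_matrix_assoc)
  then show ?thesis by (simp add: linear_conv_bounded_linear)
qed

lemma symmetric_matrix_entry:
  assumes "transpose A = A"
  shows "A $ r $ c = A $ c $ r"
  using arg_cong[OF assms, of "\<lambda>M. M $ c $ r"] by (simp add: transpose_def)

lemma symmetric_matrix_inner:
  fixes A :: "real^'m::finite^'m"
  assumes "transpose A = A"
  shows "x \<bullet> (A *v y) = (A *v x) \<bullet> y"
  by (metis assms dot_lmul_matrix transpose_matrix_vector)

lemma orthogonal_matrix_norm_mult:
  "orthogonal_matrix (Q::real^'n::finite^'n) \<Longrightarrow> norm (Q *v x) = norm x"
  using orthogonal_transformation_matrix[of "(*v) Q"] orthogonal_transformation_norm by auto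

lemma orthogonal_matrix_norm_le:
  fixes A :: "real^'d::finite^'d"
  assumes "orthogonal_matrix A"
  shows "norm A \<le> real CARD('d)"
proof -
  have "norm (A $ i) = 1" for i
    using assms orthogonal_matrix_orthonormal_rows[of A] by (simp add: row_def vec_nth_inverse)
  moreover have "norm A \<le> (\<Sum>i\<in>UNIV. norm (A $ i))"
    unfolding norm_vec_def by (rule L2_set_le_sum) simp
  ultimately show ?thesis by simp
qed

lemma matrix_inv_right:
  assumes "invertible A"
  shows "A ** matrix_inv A = mat 1"
  using someI_ex[OF assms[unfolded invertible_def]] by (simp add: matrix_inv_def)

lemma invertible_iff_ker_trivial:
  fixes A :: "'a::field^'n::finite^'n"
  shows "invertible A \<longleftrightarrow> (\<forall>v. A *v v = 0 \<longrightarrow> v = 0)"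
  by (metis invertible_left_inverse matrix_left_invertible_ker)

lemma continuous_on_det:
  fixes M :: "'a::topological_space \<Rightarrow> real^'m::finite^'m"
  assumes "\<And>r c. continuous_on S (\<lambda>s. M s $ r $ c)"
  shows "continuous_on S (\<lambda>s. det (M s))"
  unfolding det_def by (intro continuous_intros assms)

lemma continuous_on_matrix_inv_entry:
  fixes M :: "'a::topological_space \<Rightarrow> real^'m::finite^'m"
  assumes cont: "\<And>r c. continuous_on S (\<lambda>s. M s $ r $ c)" and inv: "\<And>s. s \<in> S \<Longrightarrow> invertible (M s)"
  shows "continuous_on S (\<lambda>s. matrix_inv (M s) $ r $ c)"
proof -
  define C where "C s = (\<chi> k l. if l = r then (mat 1 :: real^'m^'m) $ k $ c else M s $ k $ l)" for s
  have det_nz: "det (M s) \<noteq> 0" if "s \<in> S" for s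
    using inv[OF that] invertible_det_nz by blast
  have "continuous_on S (\<lambda>s. det (C s) / det (M s))"
  proof (intro continuous_on_divide continuous_on_det ballI det_nz)
    show "continuous_on S (\<lambda>s. C s $ k $ l)" for k l
      by (cases "l = r") (simp_all add: C_def cont)
  qed (rule cont)
  moreover have "det (C s) / det (M s) = matrix_inv (M s) $ r $ c" if "s \<in> S" for s
  proof -
    have "M s *v (\<chi> k. matrix_inv (M s) $ k $ c) = (\<chi> k. mat 1 $ k $ c)"
      using arg_cong[OF matrix_inv_right[OF inv[OF that]], of "\<lambda>A. \<chi> k. A $ k $ c"]
      by (simp add: matrix_matrix_mult_def matrix_vector_mult_def)
    then have "(\<chi> k. matrix_inv (M s) $ k $ c) =
        (\<chi> k. det (\<chi> i l. if l = k then (\<chi> k. mat 1 $ k $ c) $ i else M s $ i $ l) / det (M s))"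
      by (rule cramer[OF det_nz[OF that], THEN iffD1])
    from arg_cong[OF this, of "\<lambda>v. v $ r"] show ?thesis by (simp add: C_def cong: if_cong)
  qed
  ultimately show ?thesis by (rule continuous_on_eq)
qed

lemma sum_UNIV_prod: "(\<Sum>r\<in>UNIV. f r) = (\<Sum>x\<in>UNIV. \<Sum>a\<in>UNIV. f (x, a))"
  by (simp add: sum.cartesian_product UNIV_Times_UNIV)

lemma sum_sum_delta_mult:
  fixes f :: "'a::finite \<Rightarrow> 'b::finite \<Rightarrow> real"
  shows "(\<Sum>y\<in>UNIV. \<Sum>b\<in>UNIV. (if x = y \<and> a = b then c else 0) * f y b) = c * f x a"
proof -
  have if_zero_mult: "(if P then c else 0) * t = (if P then c * t else 0)" for P and t :: real
    by simp
  have "(\<Sum>y\<in>UNIV. \<Sum>b\<in>UNIV. (if x = y \<and> a = b then c else 0) * f y b) =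
      (\<Sum>y\<in>UNIV. if x = y then c * f y a else 0)"
    by (intro sum.cong) (auto simp: if_zero_mult)
  then show ?thesis by simp
qed

section \<open>Moore--Penrose inverse of a symmetric matrix\<close>

lemma orthogonal_projection_matrix_exists:
  fixes K :: "(real^'m::finite) set"
  assumes "subspace K"
  obtains Q :: "real^'m^'m"
  where "transpose Q = Q" "\<And>v. Q *v v \<in> K" "\<And>v. v \<in> K \<Longrightarrow> Q *v v = v"
proof -
  obtain B where B: "B \<subseteq> K" "pairwise orthogonal B" "span B = K"
    using orthogonal_basis_subspace[OF assms] by metis
  define f where "f v = (\<Sum>b\<in>B. (b \<bullet> v / (b \<bullet> b)) *\<^sub>R b)" for v :: "real^'m"
  have "linear f"
    unfolding f_def
    by (auto simp: linear_iff inner_add_right add_divide_distrib scaleR_add_left sum.distrib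
        scaleR_sum_right)
  define Q where "Q = matrix f"
  have Q: "Q *v v = f v" for v
    using \<open>linear f\<close> by (simp add: Q_def matrix_works)
  have fK: "f v \<in> K" for v
  proof -
    have "f v \<in> span B" unfolding f_def by (intro span_sum span_mul span_base)
    then show ?thesis using B(3) by simp
  qed
  have "Q *v v = v" if "v \<in> K" for v
  proof -
    have "v - f v \<in> span B" using span_diff[of v B "f v"] that fK B(3) by simp
    then have "orthogonal (v - f v) (v - f v)"
      using Gram_Schmidt_step[OF B(2), of "v - f v" v] by (simp add: f_def)
    then show ?thesis by (simp add: Q orthogonal_def)
  qed
  moreover have "transpose Q = Q"
    by (simp add: Q_def f_def vec_eq_iff transpose_def matrix_def inner_axis mult.commute)
  ultimately show thesis using that Q fK by simp
qed

definition moore_penrose_inverse :: "real^'m::finite^'m \<Rightarrow> real^'m^'m \<Rightarrow> bool" where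
  "moore_penrose_inverse A X \<longleftrightarrow> A ** X ** A = A \<and> X ** A ** X = X \<and>
     transpose (A ** X) = A ** X \<and> transpose (X ** A) = X ** A"

lemma moore_penrose_unique:
  assumes "moore_penrose_inverse A X" "moore_penrose_inverse A Y"
  shows "X = Y"
proof -
  have X: "A ** X ** A = A" "X ** A ** X = X" "transpose (A ** X) = A ** X" "transpose (X ** A) = X ** A"
    and Y: "A ** Y ** A = A" "Y ** A ** Y = Y" "transpose (A ** Y) = A ** Y" "transpose (Y ** A) = Y ** A"
    using assms by (simp_all add: moore_penrose_inverse_def)
  have "X = X ** transpose (A ** X)" using X(2,3) by (simp add: matrix_mul_assoc)
  also have "\<dots> = X ** transpose X ** transpose (A ** Y ** A)"
    using Y(1) by (simp add: matrix_transpose_mul matrix_mul_assoc)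
  also have "\<dots> = X ** transpose (A ** X) ** (A ** Y)"
    using Y(3) by (simp add: matrix_transpose_mul matrix_mul_assoc)
  also have "\<dots> = X ** A ** Y" using X(2,3) by (simp add: matrix_mul_assoc)
  finally have XAY: "X = X ** A ** Y" .
  have "Y = transpose (Y ** A) ** Y" using Y(2,4) by simp
  also have "\<dots> = transpose (A ** X ** A) ** transpose Y ** Y"
    using X(1) by (simp add: matrix_transpose_mul)
  also have "\<dots> = (X ** A) ** transpose (Y ** A) ** Y"
    using X(4) by (simp add: matrix_transpose_mul matrix_mul_assoc)
  also have "\<dots> = X ** A ** (Y ** A ** Y)" using Y(4) by (simp add: matrix_mul_assoc)
  also have "\<dots> = X ** A ** Y" using Y(2) by simp
  finally show ?thesis using XAY by simp
qed

lemma symmetric_kernel_projection: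
  fixes A :: "real^'m::finite^'m"
  assumes sym: "transpose A = A"
  obtains Q where "transpose Q = Q" "A ** Q = 0" "Q ** A = 0" "Q ** Q = Q" "invertible (A + Q)"
proof -
  obtain Q :: "real^'m^'m" where Q: "transpose Q = Q" "\<And>v. A *v (Q *v v) = 0"
    "\<And>v. A *v v = 0 \<Longrightarrow> Q *v v = v"
    using orthogonal_projection_matrix_exists[of "{v. A *v v = 0}"]
    by (auto simp: subspace_def matrix_vector_right_distrib matrix_vector_mult_scaleR)
  have AQ: "A ** Q = 0"
    using Q(2) by (simp add: matrix_eq matrix_vector_mul_assoc[symmetric])
  have "Q ** A = transpose (A ** Q)"
    by (simp add: matrix_transpose_mul Q(1) sym)
  then have QA: "Q ** A = 0"
    by (simp add: AQ transpose_def vec_eq_iff)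
  have QQ: "Q ** Q = Q"
    using Q(2,3) by (simp add: matrix_eq matrix_vector_mul_assoc[symmetric])
  have "v = 0" if "(A + Q) *v v = 0" for v
  proof -
    from that have Av: "A *v v = - (Q *v v)" by (simp add: matrix_vector_mult_add_rdistrib eq_neg_iff_add_eq_0)
    have "(A *v v) \<bullet> (Q *v v) = v \<bullet> (A *v (Q *v v))" using symmetric_matrix_inner[OF sym] by simp
    then have "Q *v v = 0" using Q(2) Av by simp
    moreover from this have "A *v v = 0" using Av by simp
    ultimately show "v = 0" using Q(3)[of v] by simp
  qed
  then have "invertible (A + Q)"
    by (simp add: invertible_iff_ker_trivial)
  with that Q(1) AQ QA QQ show thesis by blast
qed

text \<open>With \<open>Q\<close> the orthogonal projection onto the kernel of the symmetric matrix \<open>A\<close>, the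
  Moore--Penrose inverse is \<open>(A + Q)\<^sup>-\<^sup>1 - Q\<close>.\<close>

lemma moore_penrose_exists_symmetric:
  fixes A :: "real^'m::finite^'m"
  assumes sym: "transpose A = A"
  shows "\<exists>X. moore_penrose_inverse A X"
proof -
  obtain Q where Q: "transpose Q = Q" and AQ: "A ** Q = 0" and QA: "Q ** A = 0" and QQ: "Q ** Q = Q"
    and "invertible (A + Q)"
    using symmetric_kernel_projection[OF sym] by blast
  then obtain Y where Y: "(A + Q) ** Y = mat 1" "Y ** (A + Q) = mat 1"
    unfolding invertible_def by blast
  have QY: "Q ** Y = Q"
    using arg_cong[OF Y(1), of "(**) Q"] by (simp add: matrix_mul_assoc matrix_add_ldistrib QA QQ)
  have YQ: "Y ** Q = Q"
    using arg_cong[OF Y(2), of "\<lambda>M. M ** Q"] by (simp add: matrix_mul_assoc[symmetric] matrix_add_rdistrib AQ QQ)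
  define X where "X = Y - Q"
  have AX: "A ** X = mat 1 - Q"
    using Y(1) QY by (simp add: X_def matrix_diff_ldistrib matrix_add_rdistrib AQ eq_diff_eq)
  have XA: "X ** A = mat 1 - Q"
    using Y(2) YQ by (simp add: X_def matrix_diff_rdistrib matrix_add_ldistrib QA eq_diff_eq)
  have QX: "Q ** X = 0" by (simp add: X_def matrix_diff_ldistrib QY QQ)
  have "transpose (mat 1 - Q) = mat 1 - transpose Q"
    by (simp add: transpose_def vec_eq_iff mat_def)
  then have "transpose (mat 1 - Q) = mat 1 - Q"
    using Q by simp
  then have "moore_penrose_inverse A X"
    unfolding moore_penrose_inverse_def AX XA by (simp add: matrix_diff_rdistrib QA QX)
  then show ?thesis ..
qed

lemma pinv_symmetric:
  fixes A :: "real^'m::finite^'m"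
  assumes "transpose A = A"
  shows "A ** pinv A ** A = A"
proof -
  have "\<exists>!X. moore_penrose_inverse A X"
    using moore_penrose_exists_symmetric[OF assms] moore_penrose_unique by blast
  then have "moore_penrose_inverse A (pinv A)"
    unfolding pinv_def moore_penrose_inverse_def[symmetric] by (rule theI')
  then show ?thesis by (simp add: moore_penrose_inverse_def)
qed

lemma pinv_energy:
  fixes A :: "real^'m::finite^'m" and X :: "real^'k::finite^'m"
  assumes sym: "transpose A = A"
  shows "transpose (pinv A ** (A ** X)) ** A ** (pinv A ** (A ** X)) = transpose X ** A ** X"
proof -
  have APA: "A ** pinv A ** A = A" by (rule pinv_symmetric[OF sym])
  have APtA: "A ** transpose (pinv A) ** A = A"
    using arg_cong[OF APA, of transpose] by (simp add: matrix_transpose_mul sym matrix_mul_assoc)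
  have "transpose (pinv A ** (A ** X)) ** A ** (pinv A ** (A ** X)) =
      transpose X ** (A ** transpose (pinv A) ** A) ** pinv A ** A ** X"
    by (simp add: matrix_transpose_mul sym matrix_mul_assoc)
  also have "\<dots> = transpose X ** (A ** pinv A ** A) ** X"
    by (simp only: APtA) (simp add: matrix_mul_assoc)
  finally show ?thesis by (simp only: APA)
qed

section \<open>The connection Laplacian and its grounded version\<close>

lemma weighted_graph_nonneg: "weighted_graph w \<Longrightarrow> 0 \<le> w x y"
  by (simp add: weighted_graph_def)

lemma weighted_graph_sym: "weighted_graph w \<Longrightarrow> w x y = w y x"
  by (simp add: weighted_graph_def)

lemma weighted_graph_no_loop: "weighted_graph w \<Longrightarrow> w x x = 0"
  by (simp add: weighted_graph_def)

lemma weighted_graph_not_edge: "weighted_graph w \<Longrightarrow> \<not> 0 < w x y \<Longrightarrow> w x y = 0"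
  using weighted_graph_nonneg[of w x y] by simp

lemma deg_nonneg: "weighted_graph w \<Longrightarrow> 0 \<le> deg w x"
  unfolding deg_def by (simp add: sum_nonneg weighted_graph_nonneg)

lemma signature_orthogonal: "\<sigma> \<in> signatures w \<Longrightarrow> 0 < w x y \<Longrightarrow> orthogonal_matrix (\<sigma> x y)"
  by (simp add: signatures_def)

lemma signature_reverse: "\<sigma> \<in> signatures w \<Longrightarrow> 0 < w x y \<Longrightarrow> \<sigma> y x = transpose (\<sigma> x y)"
  by (simp add: signatures_def)

lemma signature_weighted_entry_sym:
  assumes "weighted_graph w" "\<sigma> \<in> signatures w"
  shows "w y x * \<sigma> y x $ b $ a = w x y * \<sigma> x y $ a $ b"
proof (cases "0 < w x y")
  case True
  then show ?thesis
    using signature_reverse[OF assms(2) True] weighted_graph_sym[OF assms(1)] by (simp add: transpose_def)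
next
  case False
  then show ?thesis
    using weighted_graph_not_edge[OF assms(1) False] weighted_graph_sym[OF assms(1), of x y] by simp
qed

lemma conn_laplacian_entry:
  "conn_laplacian w \<sigma> $ (x, a) $ (y, b) =
     (if x = y then (if a = b then deg w x else 0) else if 0 < w x y then - w x y * \<sigma> x y $ a $ b else 0)"
  by (simp add: conn_laplacian_def)

lemma conn_laplacian_entry_signature:
  assumes "weighted_graph w" "\<sigma> \<in> signatures w"
  shows "conn_laplacian w \<sigma> $ (x, a) $ (y, b) =
           (if x = y \<and> a = b then deg w x else 0) - w x y * \<sigma> x y $ a $ b"
  using weighted_graph_no_loop[OF assms(1), of x] weighted_graph_not_edge[OF assms(1), of x y]
  by (auto simp: conn_laplacian_entry)

lemma conn_laplacian_symmetric:
  assumes "weighted_graph w" "\<sigma> \<in> signatures w"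
  shows "transpose (conn_laplacian w \<sigma>) = conn_laplacian w \<sigma>"
  using signature_weighted_entry_sym[OF assms]
  by (auto simp: vec_eq_iff transpose_def conn_laplacian_entry_signature[OF assms])

definition block_at :: "real^('n::finite \<times> 'd::finite) \<Rightarrow> 'n \<Rightarrow> real^'d" where
  "block_at v x = (\<chi> a. v $ (x, a))"

lemma inner_block_at: "v \<bullet> u = (\<Sum>x\<in>UNIV. block_at v x \<bullet> block_at u x)"
  by (simp add: inner_vec_def sum_UNIV_prod block_at_def)

lemma block_at_conn_laplacian:
  assumes "weighted_graph w" "\<sigma> \<in> signatures w"
  shows "block_at (conn_laplacian w \<sigma> *v v) x =
           deg w x *\<^sub>R block_at v x - (\<Sum>y\<in>UNIV. w x y *\<^sub>R (\<sigma> x y *v block_at v y))"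
proof -
  have "(conn_laplacian w \<sigma> *v v) $ (x, a) =
      (\<Sum>y\<in>UNIV. \<Sum>b\<in>UNIV. (if x = y \<and> a = b then deg w x else 0) * v $ (y, b)) -
      (\<Sum>y\<in>UNIV. \<Sum>b\<in>UNIV. w x y * (\<sigma> x y $ a $ b * v $ (y, b)))" for a
    by (simp add: matrix_vector_mult_def sum_UNIV_prod conn_laplacian_entry_signature[OF assms]
        left_diff_distrib sum_subtractf mult.assoc)
  then show ?thesis
    by (simp add: vec_eq_iff block_at_def matrix_vector_mult_def sum_distrib_left sum_sum_delta_mult)
qed

lemma conn_laplacian_quadratic_form:
  assumes wg: "weighted_graph w" and sg: "\<sigma> \<in> signatures w"
  shows "2 * (v \<bullet> (conn_laplacian w \<sigma> *v v)) =
           (\<Sum>x\<in>UNIV. \<Sum>y\<in>UNIV. w x y * (norm (block_at v x - \<sigma> x y *v block_at v y))\<^sup>2)"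
proof -
  let ?u = "block_at v"
  have edge: "w x y * (norm (?u x - \<sigma> x y *v ?u y))\<^sup>2 =
      w x y * (norm (?u x))\<^sup>2 + w x y * (norm (?u y))\<^sup>2 - 2 * (w x y * (?u x \<bullet> (\<sigma> x y *v ?u y)))" for x y
  proof (cases "0 < w x y")
    case True
    then have "norm (\<sigma> x y *v ?u y) = norm (?u y)"
      using signature_orthogonal[OF sg] orthogonal_matrix_norm_mult by blast
    then have "(\<sigma> x y *v ?u y) \<bullet> (\<sigma> x y *v ?u y) = ?u y \<bullet> ?u y"
      by (metis power2_norm_eq_inner)
    then show ?thesis
      by (simp add: power2_norm_eq_inner inner_diff_left inner_diff_right inner_commute algebra_simps)
  next
    case False
    then show ?thesis using weighted_graph_not_edge[OF wg False] by simp
  qed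
  have out_deg: "(\<Sum>x\<in>UNIV. \<Sum>y\<in>UNIV. w x y * (norm (?u x))\<^sup>2) = (\<Sum>x\<in>UNIV. deg w x * (norm (?u x))\<^sup>2)"
    by (simp add: deg_def sum_distrib_right)
  have in_deg: "(\<Sum>x\<in>UNIV. \<Sum>y\<in>UNIV. w x y * (norm (?u y))\<^sup>2) = (\<Sum>x\<in>UNIV. deg w x * (norm (?u x))\<^sup>2)"
    by (subst sum.swap) (simp add: deg_def sum_distrib_right weighted_graph_sym[OF wg])
  have "v \<bullet> (conn_laplacian w \<sigma> *v v) =
      (\<Sum>x\<in>UNIV. deg w x * (norm (?u x))\<^sup>2) - (\<Sum>x\<in>UNIV. \<Sum>y\<in>UNIV. w x y * (?u x \<bullet> (\<sigma> x y *v ?u y)))"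
    by (simp add: inner_block_at block_at_conn_laplacian[OF wg sg] inner_diff_right inner_sum_right
        power2_norm_eq_inner sum_subtractf)
  then show ?thesis
    by (simp add: edge sum_subtractf sum.distrib out_deg in_deg sum_distrib_left)
qed

lemma conn_laplacian_zero_energy_imp_norm_const:
  assumes wg: "weighted_graph w" and sg: "\<sigma> \<in> signatures w" and con: "graph_connected w"
    and zero: "v \<bullet> (conn_laplacian w \<sigma> *v v) = 0"
  shows "norm (block_at v x) = norm (block_at v y)"
proof -
  let ?u = "block_at v"
  have "(\<Sum>x\<in>UNIV. \<Sum>y\<in>UNIV. w x y * (norm (?u x - \<sigma> x y *v ?u y))\<^sup>2) = 0"
    using conn_laplacian_quadratic_form[OF wg sg, of v] zero by simp
  moreover have "0 \<le> w x y * (norm (?u x - \<sigma> x y *v ?u y))\<^sup>2" for x y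
    using weighted_graph_nonneg[OF wg] by simp
  ultimately have balanced: "w x y * (norm (?u x - \<sigma> x y *v ?u y))\<^sup>2 = 0" for x y
    by (simp add: sum_nonneg_eq_0_iff sum_nonneg)
  have edge: "norm (?u x) = norm (?u y)" if "0 < w x y" for x y
  proof -
    have "?u x = \<sigma> x y *v ?u y" using balanced[of x y] that by simp
    then show ?thesis using orthogonal_matrix_norm_mult[OF signature_orthogonal[OF sg that]] by simp
  qed
  have "norm (?u x) = norm (?u y)" if "(x, y) \<in> {(a, b). 0 < w a b}\<^sup>*" for x y
    using that by (induction rule: rtrancl_induct) (auto simp: edge)
  then show ?thesis using con by (simp add: graph_connected_def)
qed

text \<open>Deleting the block row and column of the ground node \<open>j\<close> is encoded by replacing them
  with those of the identity, so that the result stays indexed by \<open>'n \<times> 'd\<close>.\<close>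

definition grounded_laplacian ::
  "('n::finite \<Rightarrow> 'n \<Rightarrow> real) \<Rightarrow> ('n \<Rightarrow> 'n \<Rightarrow> real^'d::finite^'d) \<Rightarrow> 'n \<Rightarrow> real^('n \<times> 'd)^('n \<times> 'd)"
where
  "grounded_laplacian w \<sigma> j = (\<chi> r c. if fst r = j \<or> fst c = j then (if r = c then 1 else 0)
                                      else conn_laplacian w \<sigma> $ r $ c)"

lemma grounded_laplacian_symmetric:
  assumes "weighted_graph w" "\<sigma> \<in> signatures w"
  shows "transpose (grounded_laplacian w \<sigma> j) = grounded_laplacian w \<sigma> j"
  using symmetric_matrix_entry[OF conn_laplacian_symmetric[OF assms]]
  by (auto simp: grounded_laplacian_def transpose_def vec_eq_iff)

lemma grounded_laplacian_mult_ground: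
  "(grounded_laplacian w \<sigma> j ** M) $ (j, a) $ b = M $ (j, a) $ b"
proof -
  have "(grounded_laplacian w \<sigma> j ** M) $ (j, a) $ b = (\<Sum>c\<in>UNIV. if c = (j, a) then M $ c $ b else 0)"
    unfolding matrix_matrix_mult_def vec_lambda_beta by (intro sum.cong) (auto simp: grounded_laplacian_def)
  then show ?thesis by simp
qed

lemma grounded_laplacian_mult_off_ground:
  assumes "x \<noteq> j" "\<And>l b. M $ (j, l) $ b = 0"
  shows "(grounded_laplacian w \<sigma> j ** M) $ (x, a) $ b = (conn_laplacian w \<sigma> ** M) $ (x, a) $ b"
  unfolding matrix_matrix_mult_def grounded_laplacian_def vec_lambda_beta
  using assms by (intro sum.cong) auto

lemma grounded_laplacian_invertible:
  assumes wg: "weighted_graph w" and sg: "\<sigma> \<in> signatures w" and con: "graph_connected w"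
  shows "invertible (grounded_laplacian w \<sigma> j)"
  unfolding invertible_iff_ker_trivial
proof (intro allI impI)
  fix v assume v: "grounded_laplacian w \<sigma> j *v v = 0"
  let ?L = "conn_laplacian w \<sigma>"
  have ground: "v $ (j, a) = 0" for a
  proof -
    have "(grounded_laplacian w \<sigma> j *v v) $ (j, a) = (\<Sum>c\<in>UNIV. if c = (j, a) then v $ c else 0)"
      unfolding matrix_vector_mult_def vec_lambda_beta by (intro sum.cong) (auto simp: grounded_laplacian_def)
    then show ?thesis using v by simp
  qed
  have "(?L *v v) $ (x, a) = 0" if "x \<noteq> j" for x a
  proof -
    have "(?L *v v) $ (x, a) = (grounded_laplacian w \<sigma> j *v v) $ (x, a)"
      unfolding matrix_vector_mult_def grounded_laplacian_def vec_lambda_beta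
      using that ground by (intro sum.cong) auto
    then show ?thesis using v by simp
  qed
  then have "v \<bullet> (?L *v v) = 0"
    unfolding inner_vec_def sum_UNIV_prod by (intro sum.neutral ballI) (metis ground inner_zero_left inner_zero_right)
  then have "norm (block_at v x) = norm (block_at v j)" for x
    by (rule conn_laplacian_zero_energy_imp_norm_const[OF wg sg con])
  moreover have "block_at v j = 0" using ground by (simp add: block_at_def vec_eq_iff)
  ultimately have "block_at v x = 0" for x by simp
  then show "v = 0" by (simp add: block_at_def vec_eq_iff)
qed

section \<open>Hitting-time holonomy\<close>

lemma walk_prob_nonneg: "weighted_graph w \<Longrightarrow> 0 \<le> walk_prob w p"
  by (induction w p rule: walk_prob.induct) (auto simp: weighted_graph_nonneg deg_nonneg)

lemma first_hit_walks_self: "first_hit_walks j j = {[j]}"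
proof -
  have "p = [j]" if "p \<in> first_hit_walks j j" for p
  proof (cases p)
    case (Cons a q)
    then show ?thesis using that by (cases q) (auto simp: first_hit_walks_def)
  qed (use that in \<open>simp add: first_hit_walks_def\<close>)
  then show ?thesis by (auto simp: first_hit_walks_def)
qed

lemma first_hit_walks_hd: "p \<in> first_hit_walks x j \<Longrightarrow> \<exists>q. p = x # q"
  by (cases p) (auto simp: first_hit_walks_def)

lemma first_hit_walks_tl:
  assumes "x \<noteq> j" "p \<in> first_hit_walks x j"
  shows "\<exists>q. p = x # q \<and> q \<in> first_hit_walks (hd q) j"
proof -
  obtain q where p: "p = x # q" using first_hit_walks_hd[OF assms(2)] by blast
  have "q \<noteq> []" using assms p by (auto simp: first_hit_walks_def)
  then show ?thesis using assms p by (auto simp: first_hit_walks_def)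
qed

lemma first_hit_walks_step:
  assumes "x \<noteq> j"
  shows "first_hit_walks x j = (\<Union>y. Cons x ` first_hit_walks y j)"
proof
  show "first_hit_walks x j \<subseteq> (\<Union>y. Cons x ` first_hit_walks y j)"
    using first_hit_walks_tl[OF assms] by blast
  have "x # p \<in> first_hit_walks x j" if "p \<in> first_hit_walks y j" for y p
    using that assms by (cases p) (auto simp: first_hit_walks_def)
  then show "(\<Union>y. Cons x ` first_hit_walks y j) \<subseteq> first_hit_walks x j"
    by blast
qed

lemma walk_prob_Cons_first_hit:
  "p \<in> first_hit_walks y j \<Longrightarrow> walk_prob w (x # p) = w x y / deg w x * walk_prob w p"
  using first_hit_walks_hd[of p y j] by auto

lemma sum_walk_prob_first_hit_le_1:
  assumes wg: "weighted_graph w"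
  shows "sum (walk_prob w) {p \<in> first_hit_walks x j. length p \<le> k} \<le> 1"
proof (induction k arbitrary: x)
  case 0
  have "{p \<in> first_hit_walks x j. length p \<le> 0} = {}"
    by (auto simp: first_hit_walks_def)
  then show ?case by (metis sum.empty zero_le_one)
next
  case (Suc k)
  let ?S = "\<lambda>k y. {p \<in> first_hit_walks y j. length p \<le> k}"
  have fin: "finite (?S k y)" for k y
    by (rule finite_subset[OF _ finite_lists_length_le[of UNIV k]]) auto
  show ?case
  proof (cases "x = j")
    case True
    have "sum (walk_prob w) (?S (Suc k) x) \<le> sum (walk_prob w) {[j]}"
      by (rule sum_mono2) (auto simp: True first_hit_walks_self walk_prob_nonneg[OF wg])
    then show ?thesis by simp
  next
    case False
    have split: "?S (Suc k) x = (\<Union>y. Cons x ` ?S k y)"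
      unfolding first_hit_walks_step[OF False] by fastforce
    have "sum (walk_prob w) (?S (Suc k) x) = (\<Sum>y\<in>UNIV. \<Sum>p\<in>?S k y. walk_prob w (x # p))"
      unfolding split
      by (subst sum.UNION_disjoint) (auto simp: fin sum.reindex dest: first_hit_walks_hd)
    also have "\<dots> = (\<Sum>y\<in>UNIV. w x y / deg w x * sum (walk_prob w) (?S k y))"
      by (auto simp: sum_distrib_left walk_prob_Cons_first_hit intro!: sum.cong)
    also have "\<dots> \<le> (\<Sum>y\<in>UNIV. w x y / deg w x)"
      using Suc.IH by (intro sum_mono mult_left_le) (simp_all add: weighted_graph_nonneg[OF wg] deg_nonneg[OF wg])
    also have "\<dots> \<le> 1"
      by (simp add: sum_divide_distrib[symmetric] deg_def[symmetric])
    finally show ?thesis .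
  qed
qed

lemma walk_prob_summable_on_first_hit_walks:
  assumes wg: "weighted_graph w"
  shows "walk_prob w summable_on first_hit_walks x j"
proof (rule nonneg_bdd_above_summable_on)
  show "0 \<le> walk_prob w p" for p by (rule walk_prob_nonneg[OF wg])
  show "bdd_above (sum (walk_prob w) ` {F. F \<subseteq> first_hit_walks x j \<and> finite F})"
  proof (rule bdd_aboveI, clarify)
    fix F assume F: "F \<subseteq> first_hit_walks x j" "finite F"
    let ?k = "Max (length ` F)"
    have "sum (walk_prob w) F \<le> sum (walk_prob w) {p \<in> first_hit_walks x j. length p \<le> ?k}"
      using F by (intro sum_mono2)
        (auto intro: finite_subset[OF _ finite_lists_length_le[of UNIV ?k]] walk_prob_nonneg[OF wg])
    also have "\<dots> \<le> 1" by (rule sum_walk_prob_first_hit_le_1[OF wg])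
    finally show "sum (walk_prob w) F \<le> 1" .
  qed
qed

lemma walk_holonomy_orthogonal:
  assumes wg: "weighted_graph w" and sg: "\<sigma> \<in> signatures w"
  shows "walk_prob w p \<noteq> 0 \<Longrightarrow> orthogonal_matrix (walk_holonomy \<sigma> p)"
proof (induction p rule: induct_list012)
  case (3 x y zs)
  then have "0 < w x y" "walk_prob w (y # zs) \<noteq> 0"
    using weighted_graph_nonneg[OF wg, of x y] by (auto simp: order_less_le)
  then show ?case
    using 3(2) signature_orthogonal[OF sg] by (simp add: orthogonal_matrix_mul)
qed (simp_all add: orthogonal_matrix_id)

lemma walk_holonomy_summable_on_first_hit_walks:
  fixes \<sigma> :: "'n::finite \<Rightarrow> 'n \<Rightarrow> real^'d::finite^'d"
  assumes wg: "weighted_graph w" and sg: "\<sigma> \<in> signatures w"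
  shows "(\<lambda>p. walk_prob w p *\<^sub>R walk_holonomy \<sigma> p) summable_on first_hit_walks x j"
proof (rule abs_summable_summable)
  have "norm (walk_prob w p *\<^sub>R walk_holonomy \<sigma> p) \<le> real CARD('d) * walk_prob w p" for p
  proof (cases "walk_prob w p = 0")
    case False
    then have "norm (walk_holonomy \<sigma> p) \<le> real CARD('d)"
      by (intro orthogonal_matrix_norm_le walk_holonomy_orthogonal[OF wg sg])
    then show ?thesis
      using walk_prob_nonneg[OF wg, of p] by (simp add: mult.commute mult_left_mono)
  qed simp
  then show "(\<lambda>p. norm (walk_prob w p *\<^sub>R walk_holonomy \<sigma> p)) summable_on first_hit_walks x j"
    by (intro summable_on_comparison_test[OF summable_on_cmult_right[OF walk_prob_summable_on_first_hit_walks[OF wg]]]) simp_all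
qed

lemma Omega0_self: "Omega0 w \<sigma> j j = mat 1"
  by (simp add: Omega0_def first_hit_walks_self)

lemma Omega0_first_step:
  fixes \<sigma> :: "'n::finite \<Rightarrow> 'n \<Rightarrow> real^'d::finite^'d"
  assumes wg: "weighted_graph w" and sg: "\<sigma> \<in> signatures w" and "x \<noteq> j"
  shows "Omega0 w \<sigma> x j = (\<Sum>y\<in>UNIV. (w x y / deg w x) *\<^sub>R (\<sigma> x y ** Omega0 w \<sigma> y j))"
proof -
  define f where "f p = walk_prob w p *\<^sub>R walk_holonomy \<sigma> p" for p
  define S where "S y = (w x y / deg w x) *\<^sub>R (\<sigma> x y ** Omega0 w \<sigma> y j)" for y
  have "(f has_sum S y) (Cons x ` first_hit_walks y j)" for y
  proof -
    have "(f has_sum Omega0 w \<sigma> y j) (first_hit_walks y j)"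
      unfolding Omega0_def f_def
      by (rule has_sum_infsum[OF walk_holonomy_summable_on_first_hit_walks[OF wg sg]])
    then have sum_tl: "((\<lambda>p. (w x y / deg w x) *\<^sub>R (\<sigma> x y ** f p)) has_sum S y) (first_hit_walks y j)"
      unfolding S_def by (intro has_sum_scaleR has_sum_bounded_linear[OF bounded_linear_matrix_mult_left])
    have "(f \<circ> Cons x) p = (w x y / deg w x) *\<^sub>R (\<sigma> x y ** f p)" if "p \<in> first_hit_walks y j" for p
      using first_hit_walks_hd[OF that] by (auto simp: f_def matrix_scalar_ac scalar_matrix_assoc)
    then have "((f \<circ> Cons x) has_sum S y) (first_hit_walks y j)"
      by (rule has_sum_cong[THEN iffD2, OF _ sum_tl])
    then show ?thesis
      by (subst has_sum_reindex) auto
  qed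
  moreover have "Cons x ` first_hit_walks y j \<inter> Cons x ` first_hit_walks y' j = {}" if "y \<noteq> y'" for y y'
    using that by (auto dest: first_hit_walks_hd)
  ultimately have "(f has_sum (\<Sum>y\<in>UNIV. S y)) (\<Union>y. Cons x ` first_hit_walks y j)"
    by (intro sum_has_sum) auto
  then show ?thesis
    unfolding first_hit_walks_step[OF \<open>x \<noteq> j\<close>, symmetric] Omega0_def f_def[symmetric] S_def
    by (rule infsumI)
qed

lemma Omega0_harmonic:
  fixes \<sigma> :: "'n::finite \<Rightarrow> 'n \<Rightarrow> real^'d::finite^'d"
  assumes wg: "weighted_graph w" and sg: "\<sigma> \<in> signatures w" and xj: "x \<noteq> j"
  shows "deg w x *\<^sub>R Omega0 w \<sigma> x j = (\<Sum>y\<in>UNIV. w x y *\<^sub>R (\<sigma> x y ** Omega0 w \<sigma> y j))"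
proof (cases "deg w x = 0")
  case True
  then have "w x y = 0" for y
    using weighted_graph_nonneg[OF wg] sum_nonneg_eq_0_iff[of UNIV "w x"] by (simp add: deg_def)
  then show ?thesis using True by simp
next
  case False
  then show ?thesis by (simp add: Omega0_first_step[OF wg sg xj] scaleR_sum_right)
qed

section \<open>The resistance through the grounded inverse\<close>

definition unit_block :: "'n::finite \<Rightarrow> real^'d::finite^('n \<times> 'd)" where
  "unit_block i = (\<chi> r b. if r = (i, b) then 1 else 0)"

definition hitting_column ::
  "('n::finite \<Rightarrow> 'n \<Rightarrow> real) \<Rightarrow> ('n \<Rightarrow> 'n \<Rightarrow> real^'d::finite^'d) \<Rightarrow> 'n \<Rightarrow> real^'d^('n \<times> 'd)"
where
  "hitting_column w \<sigma> j = (\<chi> r b. if fst r = j then 0 else Omega0 w \<sigma> (fst r) j $ snd r $ b)"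

definition ground_coupling ::
  "('n::finite \<Rightarrow> 'n \<Rightarrow> real) \<Rightarrow> ('n \<Rightarrow> 'n \<Rightarrow> real^'d::finite^'d) \<Rightarrow> 'n \<Rightarrow> real^'d^('n \<times> 'd)"
where
  "ground_coupling w \<sigma> j = (\<chi> r b. if fst r = j then 0 else w (fst r) j * \<sigma> (fst r) j $ snd r $ b)"

definition block_row :: "real^'k::finite^('n::finite \<times> 'd::finite) \<Rightarrow> 'n \<Rightarrow> real^'k^'d" where
  "block_row M y = (\<chi> l b. M $ (y, l) $ b)"

lemma conn_laplacian_mult_entry:
  assumes "weighted_graph w" "\<sigma> \<in> signatures w"
  shows "(conn_laplacian w \<sigma> ** M) $ (x, a) $ b =
           deg w x * M $ (x, a) $ b - (\<Sum>y\<in>UNIV. w x y * (\<sigma> x y ** block_row M y) $ a $ b)"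
proof -
  have "(conn_laplacian w \<sigma> ** M) $ (x, a) $ b = block_at (conn_laplacian w \<sigma> *v (\<chi> r. M $ r $ b)) x $ a"
    by (simp add: block_at_def matrix_matrix_mult_def matrix_vector_mult_def)
  also have "\<dots> = deg w x * M $ (x, a) $ b - (\<Sum>y\<in>UNIV. w x y * (\<sigma> x y ** block_row M y) $ a $ b)"
    by (subst block_at_conn_laplacian[OF assms])
      (simp add: block_at_def block_row_def matrix_matrix_mult_def matrix_vector_mult_def)
  finally show ?thesis .
qed

lemma grounded_laplacian_mult_hitting_column:
  fixes \<sigma> :: "'n::finite \<Rightarrow> 'n \<Rightarrow> real^'d::finite^'d"
  assumes wg: "weighted_graph w" and sg: "\<sigma> \<in> signatures w"
  shows "grounded_laplacian w \<sigma> j ** hitting_column w \<sigma> j = ground_coupling w \<sigma> j"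
proof -
  let ?Z = "hitting_column w \<sigma> j"
  have ground: "?Z $ (j, l) $ b = 0" for l b by (simp add: hitting_column_def)
  have "(grounded_laplacian w \<sigma> j ** ?Z) $ (x, a) $ b = ground_coupling w \<sigma> j $ (x, a) $ b" for x a b
  proof (cases "x = j")
    case True
    then show ?thesis by (simp add: grounded_laplacian_mult_ground ground ground_coupling_def)
  next
    case False
    have "block_row ?Z y = (if y = j then 0 else Omega0 w \<sigma> y j)" for y
      by (simp add: block_row_def hitting_column_def vec_eq_iff)
    then have "(\<Sum>y\<in>UNIV. w x y *\<^sub>R (\<sigma> x y ** Omega0 w \<sigma> y j)) =
        (\<Sum>y\<in>UNIV. w x y *\<^sub>R (\<sigma> x y ** block_row ?Z y)) + w x j *\<^sub>R \<sigma> x j"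
      by (simp add: Omega0_self if_distrib[of "\<lambda>M. _ *\<^sub>R (_ ** M)"] sum.If_cases
          sum.remove[of UNIV j] add.commute Compl_eq_Diff_UNIV cong: if_cong)
    with Omega0_harmonic[OF wg sg False]
    have "deg w x * Omega0 w \<sigma> x j $ a $ b - (\<Sum>y\<in>UNIV. w x y * (\<sigma> x y ** block_row ?Z y) $ a $ b) =
        w x j * \<sigma> x j $ a $ b"
      by (auto dest!: arg_cong[of _ _ "\<lambda>M. M $ a $ b"] simp: sum_component)
    then show ?thesis
      using False by (simp add: grounded_laplacian_mult_off_ground ground conn_laplacian_mult_entry[OF wg sg]
          hitting_column_def ground_coupling_def)
  qed
  then show ?thesis by (simp add: vec_eq_iff)
qed

lemma conn_laplacian_mult_ground_row:
  assumes wg: "weighted_graph w" and sg: "\<sigma> \<in> signatures w" and ground: "\<And>l b. X $ (j, l) $ b = 0"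
  shows "(conn_laplacian w \<sigma> ** X) $ (j, a) $ b = - (transpose X ** ground_coupling w \<sigma> j) $ b $ a"
proof -
  have sym: "w y j * \<sigma> y j $ l $ a = w j y * \<sigma> j y $ a $ l" for y l
    by (rule signature_weighted_entry_sym[OF wg sg])
  have swap: "w j y * (\<Sum>l\<in>UNIV. \<sigma> j y $ a $ l * X $ (y, l) $ b) =
      (\<Sum>l\<in>UNIV. X $ (y, l) $ b * (if y = j then 0 else w y j * \<sigma> y j $ l $ a))" for y
  proof (cases "y = j")
    case False
    show ?thesis
      unfolding sum_distrib_left using False by (intro sum.cong refl) (simp add: sym mult.commute mult.left_commute)
  qed (simp add: weighted_graph_no_loop[OF wg])
  have "(conn_laplacian w \<sigma> ** X) $ (j, a) $ b =
      - (\<Sum>y\<in>UNIV. \<Sum>l\<in>UNIV. X $ (y, l) $ b * (if y = j then 0 else w y j * \<sigma> y j $ l $ a))"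
    by (subst conn_laplacian_mult_entry[OF wg sg]) (simp add: ground block_row_def matrix_matrix_mult_def swap)
  also have "\<dots> = - (transpose X ** ground_coupling w \<sigma> j) $ b $ a"
    by (simp add: matrix_matrix_mult_def transpose_def ground_coupling_def sum_UNIV_prod cong: if_cong)
  finally show ?thesis .
qed

lemma grounded_laplacian_solution_ground:
  assumes "i \<noteq> j" "grounded_laplacian w \<sigma> j ** X = unit_block i"
  shows "X $ (j, l) $ b = 0"
  using grounded_laplacian_mult_ground[of w \<sigma> j X l b] assms by (simp add: unit_block_def)

lemma conn_laplacian_mult_grounded_solution:
  fixes \<sigma> :: "'n::finite \<Rightarrow> 'n \<Rightarrow> real^'d::finite^'d"
  assumes wg: "weighted_graph w" and sg: "\<sigma> \<in> signatures w" and ij: "i \<noteq> j"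
    and X: "grounded_laplacian w \<sigma> j ** X = unit_block i"
  shows "conn_laplacian w \<sigma> ** X = Nmat w \<sigma> i j"
proof -
  have ground: "X $ (j, l) $ b = 0" for l b
    by (rule grounded_laplacian_solution_ground[OF ij X])
  \<comment> \<open>\<open>X\<^sup>T B = X\<^sup>T L\<^sub>j Z = (L\<^sub>j X)\<^sup>T Z = E\<^sub>i\<^sup>T Z\<close> for the hitting column \<open>Z\<close> and ground coupling \<open>B\<close>,
    using the symmetry of \<open>L\<^sub>j\<close>\<close>
  have reciprocity: "transpose X ** ground_coupling w \<sigma> j = transpose (unit_block i) ** hitting_column w \<sigma> j"
    by (simp add: X[symmetric] grounded_laplacian_mult_hitting_column[OF wg sg, symmetric]
        matrix_transpose_mul grounded_laplacian_symmetric[OF wg sg] matrix_mul_assoc)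
  have "(conn_laplacian w \<sigma> ** X) $ (x, a) $ b = Nmat w \<sigma> i j $ (x, a) $ b" for x a b
  proof (cases "x = j")
    case True
    have "(transpose (unit_block i) ** hitting_column w \<sigma> j) $ b $ a =
        (\<Sum>r\<in>UNIV. if r = (i, b) then Omega0 w \<sigma> i j $ b $ a else 0)"
      unfolding matrix_matrix_mult_def transpose_def vec_lambda_beta
      by (intro sum.cong) (auto simp: unit_block_def hitting_column_def ij)
    then have "(transpose (unit_block i) ** hitting_column w \<sigma> j) $ b $ a = Omega0 w \<sigma> i j $ b $ a"
      by simp
    then have "(conn_laplacian w \<sigma> ** X) $ (j, a) $ b = - Omega0 w \<sigma> i j $ b $ a"
      by (simp add: conn_laplacian_mult_ground_row[OF wg sg ground] reciprocity)
    then show ?thesis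
      using True ij by (simp add: Nmat_def transpose_def)
  next
    case False
    have "(conn_laplacian w \<sigma> ** X) $ (x, a) $ b = unit_block i $ (x, a) $ b"
      using grounded_laplacian_mult_off_ground[OF False ground, of w \<sigma> a b] X by simp
    then show ?thesis
      using False by (simp add: unit_block_def Nmat_def mat_def)
  qed
  then show ?thesis by (simp add: vec_eq_iff)
qed

lemma trace_energy_eq_grounded_solution_diagonal:
  fixes \<sigma> :: "'n::finite \<Rightarrow> 'n \<Rightarrow> real^'d::finite^'d"
  assumes wg: "weighted_graph w" and sg: "\<sigma> \<in> signatures w" and ij: "i \<noteq> j"
    and X: "grounded_laplacian w \<sigma> j ** X = unit_block i"
  shows "trace (transpose (Wmat w \<sigma> i j) ** conn_laplacian w \<sigma> ** Wmat w \<sigma> i j) = (\<Sum>b\<in>UNIV. X $ (i, b) $ b)"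
proof -
  let ?L = "conn_laplacian w \<sigma>" and ?N = "Nmat w \<sigma> i j"
  have LX: "?L ** X = ?N" by (rule conn_laplacian_mult_grounded_solution[OF wg sg ij X])
  have ground: "X $ (j, l) $ b = 0" for l b
    by (rule grounded_laplacian_solution_ground[OF ij X])
  have "transpose (Wmat w \<sigma> i j) ** ?L ** Wmat w \<sigma> i j = transpose X ** ?L ** X"
    unfolding Wmat_def LX[symmetric] by (rule pinv_energy[OF conn_laplacian_symmetric[OF wg sg]])
  also have "\<dots> = transpose X ** ?N"
    by (simp add: matrix_mul_assoc[symmetric] LX)
  finally have energy: "transpose (Wmat w \<sigma> i j) ** ?L ** Wmat w \<sigma> i j = transpose X ** ?N" .
  have "trace (transpose X ** ?N) = (\<Sum>b\<in>UNIV. \<Sum>r\<in>UNIV. if r = (i, b) then X $ r $ b else 0)"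
    unfolding trace_def matrix_matrix_mult_def transpose_def vec_lambda_beta
    by (intro sum.cong refl) (auto simp: Nmat_def mat_def ground ij split: prod.splits)
  then show ?thesis by (simp add: energy)
qed

lemma matrix_inv_mult_unit_block:
  "(matrix_inv A ** unit_block i) $ (i, b) $ b = matrix_inv A $ (i, b) $ (i, b)"
proof -
  have "(matrix_inv A ** unit_block i) $ (i, b) $ b = (\<Sum>r\<in>UNIV. if r = (i, b) then matrix_inv A $ (i, b) $ r else 0)"
    unfolding matrix_matrix_mult_def vec_lambda_beta by (intro sum.cong) (auto simp: unit_block_def)
  then show ?thesis by simp
qed

lemma trace_energy_eq_grounded_inverse:
  fixes \<sigma> :: "'n::finite \<Rightarrow> 'n \<Rightarrow> real^'d::finite^'d"
  assumes wg: "weighted_graph w" and con: "graph_connected w" and sg: "\<sigma> \<in> signatures w"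
    and ij: "i \<noteq> j"
  shows "trace (transpose (Wmat w \<sigma> i j) ** conn_laplacian w \<sigma> ** Wmat w \<sigma> i j) =
           (\<Sum>b\<in>UNIV. matrix_inv (grounded_laplacian w \<sigma> j) $ (i, b) $ (i, b))"
proof -
  let ?G = "grounded_laplacian w \<sigma> j"
  have "?G ** (matrix_inv ?G ** unit_block i) = unit_block i"
    using matrix_inv_right[OF grounded_laplacian_invertible[OF wg sg con]]
    by (simp add: matrix_mul_assoc)
  from trace_energy_eq_grounded_solution_diagonal[OF wg sg ij this] show ?thesis
    by (simp add: matrix_inv_mult_unit_block)
qed

lemma conn_eff_resistance_eq_grounded_inverse:
  fixes \<sigma> :: "'n::finite \<Rightarrow> 'n \<Rightarrow> real^'d::finite^'d"
  assumes "weighted_graph w" "graph_connected w" "\<sigma> \<in> signatures w" "i \<noteq> j"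
  shows "conn_eff_resistance w \<sigma> i j = 1 / (2 * real CARD('d)) *
           ((\<Sum>b\<in>UNIV. matrix_inv (grounded_laplacian w \<sigma> j) $ (i, b) $ (i, b)) +
            (\<Sum>b\<in>UNIV. matrix_inv (grounded_laplacian w \<sigma> i) $ (j, b) $ (j, b)))"
  using trace_energy_eq_grounded_inverse[OF assms] trace_energy_eq_grounded_inverse[OF assms(1-3) assms(4)[symmetric]]
  by (simp add: conn_eff_resistance_def)

section \<open>Continuity in the signature\<close>

lemma continuous_on_signature_entry:
  "continuous_on S (\<lambda>\<sigma>::'n \<Rightarrow> 'n \<Rightarrow> real^'d::finite^'d. \<sigma> x y $ a $ b)"
proof -
  have "continuous_on S (\<lambda>\<sigma>::'n \<Rightarrow> 'n \<Rightarrow> real^'d^'d. \<sigma> x)"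
    by (rule continuous_on_product_then_coordinatewise[OF continuous_on_id])
  then have "continuous_on S (\<lambda>\<sigma>::'n \<Rightarrow> 'n \<Rightarrow> real^'d^'d. \<sigma> x y)"
    by (rule continuous_on_product_then_coordinatewise)
  then show ?thesis by (intro continuous_on_component)
qed

lemma continuous_on_grounded_laplacian_entry:
  "continuous_on S (\<lambda>\<sigma>. grounded_laplacian w \<sigma> j $ r $ c)"
proof -
  have "continuous_on S (\<lambda>\<sigma>. conn_laplacian w \<sigma> $ (x, a) $ (y, b))" for x a y b
    unfolding conn_laplacian_entry
    by (cases "x = y"; cases "0 < w x y") (auto intro!: continuous_intros continuous_on_signature_entry)
  from this[of "fst r" "snd r" "fst c" "snd c"] show ?thesis
    by (cases "fst r = j \<or> fst c = j") (simp_all add: grounded_laplacian_def)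
qed

theorem theorem6p11:
  fixes w :: "'n::finite \<Rightarrow> 'n \<Rightarrow> real" and i j :: 'n
  assumes "weighted_graph w" and "graph_connected w" and "i \<noteq> j"
  shows "continuous_on (signatures w :: ('n \<Rightarrow> 'n \<Rightarrow> real^'d::finite^'d) set)
           (\<lambda>\<sigma>. conn_eff_resistance w \<sigma> i j)"
proof -
  have "continuous_on (signatures w :: ('n \<Rightarrow> 'n \<Rightarrow> real^'d^'d) set) (\<lambda>\<sigma>. 1 / (2 * real CARD('d)) *
      ((\<Sum>b\<in>UNIV. matrix_inv (grounded_laplacian w \<sigma> j) $ (i, b) $ (i, b)) +
       (\<Sum>b\<in>UNIV. matrix_inv (grounded_laplacian w \<sigma> i) $ (j, b) $ (j, b))))"
    using grounded_laplacian_invertible[OF assms(1) _ assms(2)]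
    by (intro continuous_intros continuous_on_matrix_inv_entry continuous_on_grounded_laplacian_entry) auto
  then show ?thesis
    by (rule continuous_on_eq) (simp add: conn_eff_resistance_eq_grounded_inverse assms)
qed

end
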